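(* Let $(G,\mathcal{C})$ be a 2-colored graph, $G=(V,E)$, and $l,u:E\to\mathbb{N}$ with $l\le u$. Suppose $f\in\mathcal{A}(G,\mathcal{C})\cap\mathbb{N}^E$ is infeasible, but $\mathcal{A}(G,\mathcal{C})\cap\mathbb{N}^E$ contains a feasible vector. Then for each $e\in E$: (i) if $f(e)<l(e)$, then $G(f)$ has a CAT through $e_1$; (ii) if $f(e)>u(e)$, then $G(f)$ has a CAT through $e_3$.
   Context: Graphs are finite, undirected, may have parallel edges but no loops; $\mathcal{C}:E\to\{R,B\}$ is a red/blue coloring. The alternating cone $\mathcal{A}(G,\mathcal{C})\subseteq\mathbb{R}^E$ consists of $x\ge0$ with, at every vertex, the sum of $x$ over incident red edges equal to the sum over incident blue edges. A vector $f\in\mathcal{A}(G,\mathcal{C})$ is feasible if $l(e)\le f(e)\le u(e)$ for all $e$, infeasible otherwise. The residual 2-colored graph $G(f)=(V,E(f))$ of $f\in\mathcal{A}(G,\mathcal{C})\cap\mathbb{N}^E$ w.r.t. $l,u$: take four disjoint copies $e_1,e_2,e_3,e_4$ of each $e\in E$ (each with the same endpoints as $e$); $e_1\in E(f)$ with color $\mathcal{C}(e)$ iff $f(e)\le u(e)-1$; $e_2\in E(f)$ with color $\mathcal{C}(e)$ iff $f(e)\le u(e)-2$; $e_3\in E(f)$ with the color opposite to $\mathcal{C}(e)$ iff $f(e)\ge l(e)+1$; $e_4\in E(f)$ with the color opposite to $\mathcal{C}(e)$ iff $f(e)\ge l(e)+2$. A CAT (closed alternating trail) is a walk $(v_0,a_1,v_1,\dots,a_m,v_m)$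 with $v_0=v_m$, distinct edges $a_1,\dots,a_m$, consecutive edges of different colors, and $a_m$, $a_1$ of different colors; it is through an edge if that edge is among the $a_j$. *)

theory Defs
  imports Complex_Main
begin

datatype color = Red | Blue

fun opp :: "color \<Rightarrow> color" where
  "opp Red = Blue" | "opp Blue = Red"

definition multigraph :: "'v set \<Rightarrow> 'e set \<Rightarrow> ('e \<Rightarrow> 'v set) \<Rightarrow> bool" where
  "multigraph V E ends \<longleftrightarrow> finite V \<and> finite E \<and>
     (\<forall>e\<in>E. ends e \<subseteq> V \<and> card (ends e) = 2)"

text \<open>Alternating cone A(G,C) as a subset of R^E (functions on E; values off E irrelevant).\<close>
definition alt_cone :: "'v set \<Rightarrow> 'e set \<Rightarrow> ('e \<Rightarrow> 'v set) \<Rightarrow> ('e \<Rightarrow> color) \<Rightarrow> ('e \<Rightarrow> real) set" where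
  "alt_cone V E ends C = {x. (\<forall>e\<in>E. 0 \<le> x e) \<and>
     (\<forall>v\<in>V. (\<Sum>e\<in>{e\<in>E. v \<in> ends e \<and> C e = Red}. x e) =
             (\<Sum>e\<in>{e\<in>E. v \<in> ends e \<and> C e = Blue}. x e))}"

definition in_alt_cone_nat :: "'v set \<Rightarrow> 'e set \<Rightarrow> ('e \<Rightarrow> 'v set) \<Rightarrow> ('e \<Rightarrow> color) \<Rightarrow> ('e \<Rightarrow> nat) \<Rightarrow> bool" where
  "in_alt_cone_nat V E ends C f \<longleftrightarrow> (\<lambda>e. real (f e)) \<in> alt_cone V E ends C"

definition feasible :: "'e set \<Rightarrow> ('e \<Rightarrow> nat) \<Rightarrow> ('e \<Rightarrow> nat) \<Rightarrow> ('e \<Rightarrow> nat) \<Rightarrow> bool" where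
  "feasible E l u f \<longleftrightarrow> (\<forall>e\<in>E. l e \<le> f e \<and> f e \<le> u e)"

text \<open>Residual 2-colored graph G(f): edge (e,i) is the copy e_i, i \<in> {1,2,3,4}.
  Its endpoints are those of e.\<close>
definition res_edges :: "'e set \<Rightarrow> ('e \<Rightarrow> nat) \<Rightarrow> ('e \<Rightarrow> nat) \<Rightarrow> ('e \<Rightarrow> nat) \<Rightarrow> ('e \<times> nat) set" where
  "res_edges E l u f =
     {(e,1) | e. e \<in> E \<and> f e + 1 \<le> u e} \<union>
     {(e,2) | e. e \<in> E \<and> f e + 2 \<le> u e} \<union>
     {(e,3) | e. e \<in> E \<and> l e + 1 \<le> f e} \<union>
     {(e,4) | e. e \<in> E \<and> l e + 2 \<le> f e}"

definition res_ends :: "('e \<Rightarrow> 'v set) \<Rightarrow> ('e \<times> nat) \<Rightarrow> 'v set" where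
  "res_ends ends a = ends (fst a)"

definition res_color :: "('e \<Rightarrow> color) \<Rightarrow> ('e \<times> nat) \<Rightarrow> color" where
  "res_color C a = (if snd a \<in> {1,2} then C (fst a) else opp (C (fst a)))"

text \<open>Closed alternating trail (v_0,a_1,v_1,...,a_m,v_m): vs = [v_0..v_m], es = [a_1..a_m].\<close>
definition is_CAT :: "'x set \<Rightarrow> ('x \<Rightarrow> 'v set) \<Rightarrow> ('x \<Rightarrow> color) \<Rightarrow> 'v list \<Rightarrow> 'x list \<Rightarrow> bool" where
  "is_CAT E ends C vs es \<longleftrightarrow>
     es \<noteq> [] \<and> length vs = length es + 1 \<and> hd vs = last vs \<and>
     distinct es \<and> set es \<subseteq> E \<and>
     (\<forall>j<length es. ends (es ! j) = {vs ! j, vs ! (j+1)}) \<and>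
     (\<forall>j. j + 1 < length es \<longrightarrow> C (es ! j) \<noteq> C (es ! (j+1))) \<and>
     C (last es) \<noteq> C (hd es)"

definition has_CAT_through :: "'x set \<Rightarrow> ('x \<Rightarrow> 'v set) \<Rightarrow> ('x \<Rightarrow> color) \<Rightarrow> 'x \<Rightarrow> bool" where
  "has_CAT_through E ends C a \<longleftrightarrow> (\<exists>vs es. is_CAT E ends C vs es \<and> a \<in> set es)"

end

theory Submission
  imports Defs
begin

text \<open>Take a feasible g in the cone. Drawn as a 2-coloured multigraph in which e has
  |g e - f e| parallel copies, coloured C e where g e > f e and oppositely where g e < f e,
  the difference g - f has as many red as blue edges at every vertex. Hence a greedily extended
  alternating trail never gets stuck, and every edge lies on a CAT. A shortest CAT through a
  copy of e never leaves a vertex twice along edges of one colour, so it uses at most two copies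
  of each edge of G; renaming them e_1, e_2 (where g > f) or e_3, e_4 (where g < f) gives a CAT
  of G(f) through e_1 resp. e_3. Finally f e < l e forces g e > f e, and f e > u e forces
  g e < f e.\<close>

section \<open>Alternating trails in balanced 2-coloured graphs\<close>

definition alternating_trail ::
  "'x set \<Rightarrow> ('x \<Rightarrow> 'v set) \<Rightarrow> ('x \<Rightarrow> color) \<Rightarrow> 'v list \<Rightarrow> 'x list \<Rightarrow> bool" where
  "alternating_trail X en col vs es \<longleftrightarrow>
     length vs = length es + 1 \<and> distinct es \<and> set es \<subseteq> X \<and>
     (\<forall>j<length es. en (es ! j) = {vs ! j, vs ! (j + 1)}) \<and>
     (\<forall>j. j + 1 < length es \<longrightarrow> col (es ! j) \<noteq> col (es ! (j + 1)))"

lemma is_CAT_iff_alternating_trail: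
  "is_CAT X en col vs es \<longleftrightarrow>
     es \<noteq> [] \<and> alternating_trail X en col vs es \<and> hd vs = last vs \<and> col (last es) \<noteq> col (hd es)"
  by (auto simp: is_CAT_def alternating_trail_def)

fun color_sign :: "color \<Rightarrow> real" where
  "color_sign Red = 1"
| "color_sign Blue = -1"

lemma color_sign_opp [simp]: "color_sign (opp c) = - color_sign c"
  by (cases c) auto

lemma color_sign_nonzero: "color_sign c \<noteq> 0"
  by (cases c) auto

lemma color_neq_imp_opp: "c \<noteq> c' \<Longrightarrow> c' = opp c"
  by (cases c; cases c') auto

lemma alternating_trail_butlast:
  assumes "alternating_trail X en col (vs @ [z]) (es @ [x])"
  shows "alternating_trail X en col vs es"
proof -
  have len: "length vs = length es + 1"
    and ends: "\<forall>j<length es + 1. en ((es @ [x]) ! j) = {(vs @ [z]) ! j, (vs @ [z]) ! (j + 1)}"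
    and alt: "\<forall>j. j + 1 < length es + 1 \<longrightarrow> col ((es @ [x]) ! j) \<noteq> col ((es @ [x]) ! (j + 1))"
    using assms by (auto simp: alternating_trail_def)
  have "en (es ! j) = {vs ! j, vs ! (j + 1)}" if "j < length es" for j
    using ends[rule_format, of j] that len by (simp add: nth_append)
  moreover have "col (es ! j) \<noteq> col (es ! (j + 1))" if "j + 1 < length es" for j
    using alt[rule_format, of j] that by (simp add: nth_append)
  ultimately show ?thesis
    using assms len by (auto simp: alternating_trail_def)
qed

lemma alternating_trail_snoc_iff:
  assumes "es \<noteq> []"
  shows "alternating_trail X en col (vs @ [z]) (es @ [x]) \<longleftrightarrow>
    alternating_trail X en col vs es \<and> x \<in> X \<and> x \<notin> set es \<and>
    en x = {last vs, z} \<and> col x \<noteq> col (last es)"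
proof
  assume tr: "alternating_trail X en col (vs @ [z]) (es @ [x])"
  then have len: "length vs = length es + 1"
    and ends: "en ((es @ [x]) ! length es) = {(vs @ [z]) ! length es, (vs @ [z]) ! (length es + 1)}"
    and alts: "\<forall>j. j + 1 < length (es @ [x]) \<longrightarrow> col ((es @ [x]) ! j) \<noteq> col ((es @ [x]) ! (j + 1))"
    unfolding alternating_trail_def by auto
  have alt: "col ((es @ [x]) ! (length es - 1)) \<noteq> col ((es @ [x]) ! (length es - 1 + 1))"
    using alts[rule_format, of "length es - 1"] assms by simp
  have "last vs = vs ! length es"
    using len by (metis last_conv_nth add_diff_cancel_right' list.size(3) nat.distinct(1) Suc_eq_plus1)
  moreover have "last es = (es @ [x]) ! (length es - 1)" "(es @ [x]) ! (length es - 1 + 1) = x"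
    using assms by (simp_all add: last_conv_nth nth_append)
  ultimately show "alternating_trail X en col vs es \<and> x \<in> X \<and> x \<notin> set es \<and>
      en x = {last vs, z} \<and> col x \<noteq> col (last es)"
    using alternating_trail_butlast[OF tr] tr ends alt len
    by (auto simp: alternating_trail_def nth_append)
next
  assume "alternating_trail X en col vs es \<and> x \<in> X \<and> x \<notin> set es \<and>
      en x = {last vs, z} \<and> col x \<noteq> col (last es)"
  then have tr: "alternating_trail X en col vs es" and x: "x \<in> X" "x \<notin> set es"
    and ends: "en x = {last vs, z}" and alt: "col x \<noteq> col (last es)"
    by auto
  have len: "length vs = length es + 1"
    using tr by (simp add: alternating_trail_def)
  have "last vs = vs ! length es"
    using len by (metis last_conv_nth add_diff_cancel_right' list.size(3) nat.distinct(1) Suc_eq_plus1)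
  moreover have "last es = es ! (length es - 1)"
    using assms by (simp add: last_conv_nth)
  moreover have "j = length es - 1" if "j + 1 = length es" for j
    using that by simp
  ultimately show "alternating_trail X en col (vs @ [z]) (es @ [x])"
    using tr x ends alt len unfolding alternating_trail_def
    by (auto simp: nth_append less_Suc_eq)
qed

lemma alternating_trail_singleton_iff:
  "alternating_trail X en col vs [x] \<longleftrightarrow> x \<in> X \<and> (\<exists>p q. vs = [p, q] \<and> en x = {p, q})"
proof
  assume tr: "alternating_trail X en col vs [x]"
  then have "length vs = 2"
    by (simp add: alternating_trail_def)
  then have "\<exists>p q. vs = [p, q]"
    by (metis One_nat_def length_0_conv length_Suc_conv numeral_2_eq_2)
  then obtain p q where "vs = [p, q]"
    by blast
  with tr show "x \<in> X \<and> (\<exists>p q. vs = [p, q] \<and> en x = {p, q})"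
    by (simp add: alternating_trail_def)
next
  assume "x \<in> X \<and> (\<exists>p q. vs = [p, q] \<and> en x = {p, q})"
  then obtain p q where "x \<in> X" "vs = [p, q]" "en x = {p, q}"
    by blast
  then show "alternating_trail X en col vs [x]"
    by (simp add: alternating_trail_def)
qed

text \<open>Inner passages of the trail through w contribute one edge of each colour and cancel.\<close>

lemma alternating_trail_sign_sum:
  assumes two_ends: "\<forall>x\<in>X. card (en x) = 2"
    and "alternating_trail X en col vs es" and "es \<noteq> []"
  shows "(\<Sum>x\<in>{x\<in>set es. w \<in> en x}. color_sign (col x)) =
    (if w = hd vs then color_sign (col (hd es)) else 0) +
    (if w = last vs then color_sign (col (last es)) else 0)"
  using assms(3,2)
proof (induction es arbitrary: vs rule: rev_nonempty_induct)
  case (single x)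
  then obtain p q where vs: "vs = [p, q]" and x: "x \<in> X" "en x = {p, q}"
    unfolding alternating_trail_singleton_iff by blast
  have "card {p, q} = 2"
    using two_ends x by metis
  then have "p \<noteq> q"
    by (cases "p = q") simp_all
  have "{y\<in>set [x]. w \<in> en y} = (if w \<in> {p, q} then {x} else {})"
    using x by auto
  then show ?case
    using vs \<open>p \<noteq> q\<close> by (simp only:) auto
next
  case (snoc x es)
  have "length vs = length es + 2"
    using snoc.prems by (simp add: alternating_trail_def)
  then obtain vs' z where vs: "vs = vs' @ [z]" and "length vs' = length es + 1"
    by (cases vs rule: rev_exhaust) auto
  then have "vs' \<noteq> []"
    by auto
  have "alternating_trail X en col vs' es \<and> x \<in> X \<and> x \<notin> set es \<and>
      en x = {last vs', z} \<and> col x \<noteq> col (last es)"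
    using snoc.prems unfolding vs alternating_trail_snoc_iff[OF snoc.hyps] .
  then have tr: "alternating_trail X en col vs' es" and x: "x \<in> X" "x \<notin> set es"
    and ends: "en x = {last vs', z}" and alt: "col x \<noteq> col (last es)"
    by blast+
  have "card {last vs', z} = 2"
    using two_ends x ends by metis
  then have "last vs' \<noteq> z"
    by (cases "last vs' = z") simp_all
  have sign_x: "color_sign (col x) = - color_sign (col (last es))"
    using color_neq_imp_opp[OF alt[symmetric]] by simp
  have "{y\<in>set (es @ [x]). w \<in> en y} =
      (if w \<in> en x then insert x {y\<in>set es. w \<in> en y} else {y\<in>set es. w \<in> en y})"
    by auto
  then have "(\<Sum>y\<in>{y\<in>set (es @ [x]). w \<in> en y}. color_sign (col y)) =
      (if w \<in> en x then color_sign (col x) else 0) + (\<Sum>y\<in>{y\<in>set es. w \<in> en y}. color_sign (col y))"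
    using x by simp
  also have "\<dots> = (if w = hd vs then color_sign (col (hd (es @ [x]))) else 0) +
      (if w = last vs then color_sign (col (last (es @ [x]))) else 0)"
  proof -
    have "hd vs = hd vs'" "last vs = z" "hd (es @ [x]) = hd es" "last (es @ [x]) = x"
      using vs \<open>vs' \<noteq> []\<close> snoc.hyps by auto
    then show ?thesis
      unfolding snoc.IH[OF tr] ends using \<open>last vs' \<noteq> z\<close> sign_x
      by (cases "w = last vs'"; cases "w = z") simp_all
  qed
  finally show ?case .
qed

definition color_balanced :: "'x set \<Rightarrow> ('x \<Rightarrow> 'v set) \<Rightarrow> ('x \<Rightarrow> color) \<Rightarrow> bool" where
  "color_balanced X en col \<longleftrightarrow> (\<forall>w. (\<Sum>x\<in>{x\<in>X. w \<in> en x}. color_sign (col x)) = 0)"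

text \<open>If the trail cannot be closed into a CAT, the used edges at its last vertex w have
  signed sum color_sign c or 2 * color_sign c, where c is the colour of the last edge; so balance at w
  leaves an unused edge of the other colour.\<close>

lemma alternating_trail_continues:
  assumes fin: "finite X" and two_ends: "\<forall>x\<in>X. card (en x) = 2"
    and bal: "color_balanced X en col"
    and tr: "alternating_trail X en col vs es" and "es \<noteq> []"
    and open_end: "\<not> (hd vs = last vs \<and> col (last es) \<noteq> col (hd es))"
  shows "\<exists>x\<in>X - set es. last vs \<in> en x \<and> col x \<noteq> col (last es)"
proof (rule ccontr)
  assume no_exit: "\<not> ?thesis"
  define w where "w = last vs"
  define c where "c = col (last es)"
  let ?U = "{x\<in>X - set es. w \<in> en x}"
  have U: "\<forall>x\<in>?U. col x = c"
    using no_exit unfolding w_def c_def by blast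
  have "set es \<subseteq> X"
    using tr by (simp add: alternating_trail_def)
  then have "{x\<in>X. w \<in> en x} = {x\<in>set es. w \<in> en x} \<union> ?U"
    by auto
  then have "(\<Sum>x\<in>{x\<in>X. w \<in> en x}. color_sign (col x)) =
      (\<Sum>x\<in>{x\<in>set es. w \<in> en x}. color_sign (col x)) + (\<Sum>x\<in>?U. color_sign (col x))"
    by (simp only:) (rule sum.union_disjoint, use fin in auto)
  also have "\<dots> = (if w = hd vs then color_sign (col (hd es)) else 0) + color_sign c +
      real (card ?U) * color_sign c"
    using alternating_trail_sign_sum[OF two_ends tr \<open>es \<noteq> []\<close>, of w] U
    unfolding w_def c_def by simp
  finally have "(if w = hd vs then color_sign (col (hd es)) else 0) =
      - (real (card ?U) + 1) * color_sign c"
    using bal unfolding color_balanced_def by (simp add: algebra_simps)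
  moreover have "(if w = hd vs then color_sign (col (hd es)) else 0) \<in> {0, color_sign c}"
    using open_end unfolding w_def c_def by auto
  ultimately have "(real (card ?U) + 1) * color_sign c = 0 \<or> (real (card ?U) + 2) * color_sign c = 0"
    by (auto simp: algebra_simps)
  then show False
    using color_sign_nonzero[of c] by simp
qed

lemma alternating_trail_extends_to_CAT:
  assumes fin: "finite X" and two_ends: "\<forall>x\<in>X. card (en x) = 2"
    and bal: "color_balanced X en col"
  shows "alternating_trail X en col vs es \<Longrightarrow> es \<noteq> [] \<Longrightarrow>
    \<exists>vs' es'. is_CAT X en col vs' es' \<and> hd es \<in> set es'"
proof (induction "card X - length es" arbitrary: vs es rule: less_induct)
  case less
  show ?case
  proof (cases "hd vs = last vs \<and> col (last es) \<noteq> col (hd es)")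
    case True
    then have "is_CAT X en col vs es"
      using less.prems by (simp add: is_CAT_iff_alternating_trail)
    then show ?thesis
      using less.prems(2) hd_in_set by blast
  next
    case False
    then obtain x where x: "x \<in> X" "x \<notin> set es" "last vs \<in> en x" "col x \<noteq> col (last es)"
      using alternating_trail_continues[OF fin two_ends bal less.prems] by auto
    have "card (en x) = 2"
      using two_ends x(1) by blast
    then have "\<exists>z. en x = {last vs, z}"
      using x(3) by (auto simp: card_2_iff)
    then obtain z where "en x = {last vs, z}"
      by blast
    then have tr: "alternating_trail X en col (vs @ [z]) (es @ [x])"
      unfolding alternating_trail_snoc_iff[OF less.prems(2)] using less.prems(1) x by blast
    have "distinct (es @ [x])" "set (es @ [x]) \<subseteq> X"
      using tr by (simp_all add: alternating_trail_def)
    then have "length (es @ [x]) \<le> card X"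
      using card_mono[OF fin] distinct_card by metis
    then have "card X - length (es @ [x]) < card X - length es"
      by simp
    from less.hyps[OF this tr] show ?thesis
      using less.prems(2) by simp
  qed
qed

lemma color_balanced_has_CAT_through:
  assumes "finite X" and "\<forall>x\<in>X. card (en x) = 2" and "color_balanced X en col" and "a \<in> X"
  shows "has_CAT_through X en col a"
proof -
  have "\<exists>p q. en a = {p, q}"
    using assms(2,4) card_2_iff by metis
  then obtain p q where "en a = {p, q}"
    by blast
  then have "alternating_trail X en col [p, q] [a]"
    using assms(4) by (simp add: alternating_trail_singleton_iff)
  from alternating_trail_extends_to_CAT[OF assms(1-3) this] show ?thesis
    by (simp add: has_CAT_through_def)
qed

section \<open>Shortest CATs\<close>

lemma is_CAT_reindex:
  assumes cat: "is_CAT X en col vs es" and L: "0 < L"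
    and \<sigma>_bound: "\<forall>k<L. \<sigma> k < length es" and inj: "inj_on \<sigma> {..<L}"
    and \<sigma>_ends: "\<forall>k<L. vs ! \<sigma> (k + 1) = vs ! (\<sigma> k + 1)" and closed: "vs ! \<sigma> 0 = vs ! \<sigma> L"
    and alt: "\<forall>k. k + 1 < L \<longrightarrow> col (es ! \<sigma> k) \<noteq> col (es ! \<sigma> (k + 1))"
    and cyc: "col (es ! \<sigma> (L - 1)) \<noteq> col (es ! \<sigma> 0)"
  shows "is_CAT X en col (map (\<lambda>k. vs ! \<sigma> k) [0..<L + 1]) (map (\<lambda>k. es ! \<sigma> k) [0..<L])"
proof -
  have "distinct es" "set es \<subseteq> X" and ends: "\<forall>j<length es. en (es ! j) = {vs ! j, vs ! (j + 1)}"
    using cat by (auto simp: is_CAT_def)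
  have "inj_on (\<lambda>k. es ! \<sigma> k) {..<L}"
    using inj \<sigma>_bound \<open>distinct es\<close> by (auto simp: inj_on_def nth_eq_iff_index_eq)
  then have "distinct (map (\<lambda>k. es ! \<sigma> k) [0..<L])"
    by (simp add: distinct_map lessThan_atLeast0)
  moreover have "set (map (\<lambda>k. es ! \<sigma> k) [0..<L]) \<subseteq> X"
    using \<open>set es \<subseteq> X\<close> \<sigma>_bound by auto
  moreover have "\<forall>k<L. en (es ! \<sigma> k) = {vs ! \<sigma> k, vs ! \<sigma> (k + 1)}"
    using ends \<sigma>_bound \<sigma>_ends by auto
  moreover have "hd (map (\<lambda>k. vs ! \<sigma> k) [0..<L + 1]) = vs ! \<sigma> 0"
    "last (map (\<lambda>k. vs ! \<sigma> k) [0..<L + 1]) = vs ! \<sigma> L"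
    "hd (map (\<lambda>k. es ! \<sigma> k) [0..<L]) = es ! \<sigma> 0"
    "last (map (\<lambda>k. es ! \<sigma> k) [0..<L]) = es ! \<sigma> (L - 1)"
    using L by (simp_all add: hd_conv_nth last_conv_nth del: upt_Suc)
  ultimately show ?thesis
    using L alt cyc closed unfolding is_CAT_def by (simp add: nth_append del: upt_Suc)
qed

text \<open>If the CAT leaves the vertex vs ! i = vs ! j twice by edges of the same colour, both
  the closed piece from i to j and the remaining closed trail alternate at the cut point.\<close>

lemma is_CAT_inner_cycle:
  assumes cat: "is_CAT X en col vs es" and ij: "i < j" "j < length es"
    and same_col: "col (es ! i) = col (es ! j)" and same_vertex: "vs ! i = vs ! j"
  shows "\<exists>vs' es'. is_CAT X en col vs' es' \<and> length es' = j - i \<and>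
    (\<forall>p\<in>{i..<j}. es ! p \<in> set es')"
proof -
  have alt: "\<forall>k. k + 1 < length es \<longrightarrow> col (es ! k) \<noteq> col (es ! (k + 1))"
    using cat by (simp add: is_CAT_def)
  define \<sigma> where "\<sigma> k = i + k" for k
  have "is_CAT X en col (map (\<lambda>k. vs ! \<sigma> k) [0..<(j - i) + 1]) (map (\<lambda>k. es ! \<sigma> k) [0..<j - i])"
  proof (rule is_CAT_reindex[OF cat])
    have "col (es ! (j - 1)) \<noteq> col (es ! j)"
      using alt[rule_format, of "j - 1"] ij by simp
    moreover have "i + (j - i - 1) = j - 1"
      using ij by auto
    ultimately show "col (es ! \<sigma> (j - i - 1)) \<noteq> col (es ! \<sigma> 0)"
      using same_col by (simp add: \<sigma>_def)
  qed (use ij same_vertex alt in \<open>auto simp: \<sigma>_def inj_on_def\<close>)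
  moreover have "es ! p \<in> set (map (\<lambda>k. es ! \<sigma> k) [0..<j - i])" if "p \<in> {i..<j}" for p
    using that by (auto simp: \<sigma>_def image_iff intro!: bexI[of _ "p - i"])
  ultimately show ?thesis
    by (intro exI[of _ "map (\<lambda>k. vs ! \<sigma> k) [0..<(j - i) + 1]"] exI[of _ "map (\<lambda>k. es ! \<sigma> k) [0..<j - i]"]) auto
qed

lemma is_CAT_outer_cycle:
  assumes cat: "is_CAT X en col vs es" and ij: "i < j" "j < length es"
    and same_col: "col (es ! i) = col (es ! j)" and same_vertex: "vs ! i = vs ! j"
  shows "\<exists>vs' es'. is_CAT X en col vs' es' \<and> length es' = length es - (j - i) \<and>
    (\<forall>p<length es. p \<notin> {i..<j} \<longrightarrow> es ! p \<in> set es')"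
proof -
  define n where "n = length es"
  have alt: "\<forall>k. k + 1 < n \<longrightarrow> col (es ! k) \<noteq> col (es ! (k + 1))"
    using cat by (simp add: is_CAT_def n_def)
  have "es \<noteq> []" "length vs = n + 1" "hd vs = last vs"
    using cat by (auto simp: is_CAT_def n_def)
  then have closed: "vs ! 0 = vs ! n"
    by (metis add_diff_cancel_right' hd_conv_nth last_conv_nth list.size(3) nat.distinct(1) Suc_eq_plus1)
  have cyc: "col (es ! (n - 1)) \<noteq> col (es ! 0)"
    using cat \<open>es \<noteq> []\<close> by (simp add: is_CAT_def n_def hd_conv_nth last_conv_nth)
  define \<sigma> where "\<sigma> k = (if k < i then k else k + (j - i))" for k
  define L where "L = n - (j - i)"
  have iL: "i < L"
    using ij by (simp add: L_def n_def)
  have "is_CAT X en col (map (\<lambda>k. vs ! \<sigma> k) [0..<L + 1]) (map (\<lambda>k. es ! \<sigma> k) [0..<L])"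
  proof (rule is_CAT_reindex[OF cat])
    show "0 < L" "\<forall>k<L. \<sigma> k < length es" "inj_on \<sigma> {..<L}"
      using iL ij by (auto simp: \<sigma>_def L_def n_def inj_on_def)
    show "\<forall>k<L. vs ! \<sigma> (k + 1) = vs ! (\<sigma> k + 1)"
      using same_vertex ij by (auto simp: \<sigma>_def not_less_iff_gr_or_eq Suc_lessI)
    have "\<sigma> L = n"
      using iL ij by (simp add: \<sigma>_def L_def n_def)
    then show "vs ! \<sigma> 0 = vs ! \<sigma> L"
      using closed same_vertex by (cases "i = 0") (auto simp: \<sigma>_def)
    show "\<forall>k. k + 1 < L \<longrightarrow> col (es ! \<sigma> k) \<noteq> col (es ! \<sigma> (k + 1))"
    proof (intro allI impI)
      fix k assume k: "k + 1 < L"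
      consider "k + 1 < i" | "k + 1 = i" | "i \<le> k"
        by linarith
      then show "col (es ! \<sigma> k) \<noteq> col (es ! \<sigma> (k + 1))"
      proof cases
        case 1
        then show ?thesis using alt ij by (simp add: \<sigma>_def n_def)
      next
        case 2
        then show ?thesis using alt[rule_format, of k] ij same_col by (auto simp: \<sigma>_def n_def)
      next
        case 3
        then show ?thesis using alt[rule_format, of "k + (j - i)"] k ij by (auto simp: \<sigma>_def L_def)
      qed
    qed
    have "\<sigma> (L - 1) = n - 1"
      using iL ij by (auto simp: \<sigma>_def L_def n_def)
    then show "col (es ! \<sigma> (L - 1)) \<noteq> col (es ! \<sigma> 0)"
      using cyc same_col by (cases "i = 0") (auto simp: \<sigma>_def)
  qed
  moreover have "es ! p \<in> set (map (\<lambda>k. es ! \<sigma> k) [0..<L])" if "p < n" "p \<notin> {i..<j}" for p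
  proof (cases "p < i")
    case True
    then show ?thesis
      using iL by (auto simp: \<sigma>_def image_iff intro!: bexI[of _ p])
  next
    case False
    then show ?thesis
      using that ij by (auto simp: \<sigma>_def image_iff L_def intro!: bexI[of _ "p - (j - i)"])
  qed
  ultimately show ?thesis
    by (intro exI[of _ "map (\<lambda>k. vs ! \<sigma> k) [0..<L + 1]"] exI[of _ "map (\<lambda>k. es ! \<sigma> k) [0..<L]"])
      (auto simp: L_def n_def)
qed

lemma is_CAT_shortcut:
  assumes cat: "is_CAT X en col vs es" and ij: "i < j" "j < length es"
    and "col (es ! i) = col (es ! j)" and "vs ! i = vs ! j" and p: "p < length es"
  shows "\<exists>vs' es'. is_CAT X en col vs' es' \<and> length es' < length es \<and> es ! p \<in> set es'"
proof (cases "p \<in> {i..<j}")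
  case True
  then show ?thesis
    using is_CAT_inner_cycle[OF assms(1-5)] ij by fastforce
next
  case False
  then show ?thesis
    using is_CAT_outer_cycle[OF assms(1-5)] ij p by fastforce
qed

definition same_color_exits_distinct :: "('x \<Rightarrow> color) \<Rightarrow> 'v list \<Rightarrow> 'x list \<Rightarrow> bool" where
  "same_color_exits_distinct col vs es \<longleftrightarrow>
     (\<forall>i j. i < j \<longrightarrow> j < length es \<longrightarrow> col (es ! i) = col (es ! j) \<longrightarrow> vs ! i \<noteq> vs ! j)"

lemma shortest_CAT_same_color_exits_distinct:
  assumes "is_CAT X en col vs es" and "x \<in> set es"
  shows "\<exists>vs es. is_CAT X en col vs es \<and> x \<in> set es \<and> same_color_exits_distinct col vs es"
  using assms
proof (induction "length es" arbitrary: vs es rule: less_induct)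
  case less
  show ?case
  proof (cases "same_color_exits_distinct col vs es")
    case True
    then show ?thesis
      using less.prems by blast
  next
    case False
    then obtain i j where "i < j" "j < length es" "col (es ! i) = col (es ! j)" "vs ! i = vs ! j"
      unfolding same_color_exits_distinct_def by blast
    moreover obtain p where "p < length es" "es ! p = x"
      using less.prems(2) by (auto simp: in_set_conv_nth)
    ultimately obtain vs' es' where "is_CAT X en col vs' es'" "length es' < length es" "x \<in> set es'"
      using is_CAT_shortcut[OF less.prems(1)] by metis
    then show ?thesis
      using less.hyps by blast
  qed
qed

lemma card_ends_ge_3_if_three_parallel_exits:
  assumes cat: "is_CAT X en col vs es" and exits: "same_color_exits_distinct col vs es"
    and ijk: "i < j" "j < k" "k < length es"
    and ends: "en (es ! j) = en (es ! i)" "en (es ! k) = en (es ! i)"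
    and cols: "col (es ! j) = col (es ! i)" "col (es ! k) = col (es ! i)"
    and fin: "finite (en (es ! i))"
  shows "3 \<le> card (en (es ! i))"
proof -
  have "vs ! i \<noteq> vs ! j" "vs ! j \<noteq> vs ! k" "vs ! i \<noteq> vs ! k"
    using exits ijk cols unfolding same_color_exits_distinct_def by (metis less_trans)+
  then have "card {vs ! i, vs ! j, vs ! k} = 3"
    by simp
  moreover have "{vs ! i, vs ! j, vs ! k} \<subseteq> en (es ! i)"
    using cat ijk ends unfolding is_CAT_def by (metis insert_subset less_trans empty_subsetI insertI1)
  ultimately show ?thesis
    using card_mono[OF fin] by metis
qed

lemma is_CAT_relabel:
  assumes cat: "is_CAT X en col vs es" and inj: "inj_on \<phi> {..<length es}"
    and \<phi>: "\<forall>k<length es. \<phi> k \<in> Y \<and> en' (\<phi> k) = en (es ! k) \<and> col' (\<phi> k) = col (es ! k)"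
  shows "is_CAT Y en' col' vs (map \<phi> [0..<length es])"
proof -
  have "es \<noteq> []"
    using cat by (simp add: is_CAT_def)
  then have "hd (map \<phi> [0..<length es]) = \<phi> 0" "last (map \<phi> [0..<length es]) = \<phi> (length es - 1)"
    "hd es = es ! 0" "last es = es ! (length es - 1)"
    by (simp_all add: hd_map last_map hd_conv_nth last_conv_nth)
  moreover have "distinct (map \<phi> [0..<length es])"
    using inj by (simp add: distinct_map atLeast0LessThan)
  ultimately show ?thesis
    using cat \<phi> \<open>es \<noteq> []\<close> unfolding is_CAT_def by auto
qed

lemma inj_on_key_repeated:
  assumes no_three: "\<forall>i j k. i < j \<longrightarrow> j < k \<longrightarrow> k < length xs \<longrightarrow>
    key (xs ! i) = key (xs ! j) \<longrightarrow> key (xs ! j) \<noteq> key (xs ! k)"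
  shows "inj_on (\<lambda>k. (key (xs ! k), \<exists>i<k. key (xs ! i) = key (xs ! k))) {..<length xs}"
proof -
  have impossible: False
    if k: "k1 < k2" "k2 < length xs" "key (xs ! k1) = key (xs ! k2)"
      "(\<exists>i<k1. key (xs ! i) = key (xs ! k1)) = (\<exists>i<k2. key (xs ! i) = key (xs ! k2))" for k1 k2
  proof -
    have "\<exists>i<k2. key (xs ! i) = key (xs ! k2)"
      using k(1,3) by blast
    then obtain i where "i < k1" "key (xs ! i) = key (xs ! k1)"
      using k(4) by blast
    then show False
      using no_three[rule_format, of i k1 k2] k by simp
  qed
  show ?thesis
  proof (rule inj_onI)
    fix k1 k2
    assume "k1 \<in> {..<length xs}" "k2 \<in> {..<length xs}"
      "(key (xs ! k1), \<exists>i<k1. key (xs ! i) = key (xs ! k1)) =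
       (key (xs ! k2), \<exists>i<k2. key (xs ! i) = key (xs ! k2))"
    then show "k1 = k2"
      unfolding prod.inject lessThan_iff
      using impossible[of k1 k2] impossible[of k2 k1] linorder_neqE_nat by metis
  qed
qed

section \<open>The difference of two vectors of the alternating cone\<close>

lemma in_alt_cone_nat_signed_sum:
  assumes mg: "multigraph V E ends" and h: "in_alt_cone_nat V E ends C h"
  shows "(\<Sum>e\<in>{e\<in>E. w \<in> ends e}. real (h e) * color_sign (C e)) = 0"
proof (cases "w \<in> V")
  case False
  then have EE: "{e\<in>E. w \<in> ends e} = {}" using mg by (auto simp: multigraph_def)
  show ?thesis unfolding EE by simp
next
  case True
  have fin: "finite E" using mg by (simp add: multigraph_def)
  let ?R = "{e\<in>E. w \<in> ends e \<and> C e = Red}" and ?B = "{e\<in>E. w \<in> ends e \<and> C e = Blue}"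
  have eq: "(\<Sum>e\<in>?R. real (h e)) = (\<Sum>e\<in>?B. real (h e))"
    using h True by (simp add: in_alt_cone_nat_def alt_cone_def)
  have U: "{e\<in>E. w \<in> ends e} = ?R \<union> ?B" by (auto intro: color.exhaust)
  have "(\<Sum>e\<in>{e\<in>E. w \<in> ends e}. real (h e) * color_sign (C e)) =
      (\<Sum>e\<in>?R. real (h e) * color_sign (C e)) + (\<Sum>e\<in>?B. real (h e) * color_sign (C e))"
    unfolding U by (rule sum.union_disjoint) (use fin in auto)
  also have "\<dots> = (\<Sum>e\<in>?R. real (h e)) - (\<Sum>e\<in>?B. real (h e))"
    by (simp add: sum_negf)
  finally show ?thesis using eq by simp
qed

text \<open>The copies (e, k) of e in the difference graph are labelled like the copies e_i in
  G(f), so both graphs use the endpoint map res_ends.\<close>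

definition diff_edges :: "'e set \<Rightarrow> ('e \<Rightarrow> nat) \<Rightarrow> ('e \<Rightarrow> nat) \<Rightarrow> ('e \<times> nat) set" where
  "diff_edges E f g = (SIGMA e:E. {..<nat \<bar>int (g e) - int (f e)\<bar>})"

definition diff_color :: "('e \<Rightarrow> color) \<Rightarrow> ('e \<Rightarrow> nat) \<Rightarrow> ('e \<Rightarrow> nat) \<Rightarrow> 'e \<times> nat \<Rightarrow> color" where
  "diff_color C f g x = (if f (fst x) < g (fst x) then C (fst x) else opp (C (fst x)))"

lemma diff_color_balanced:
  assumes mg: "multigraph V E ends"
    and f: "in_alt_cone_nat V E ends C f" and g: "in_alt_cone_nat V E ends C g"
  shows "color_balanced (diff_edges E f g) (res_ends ends) (diff_color C f g)"
  unfolding color_balanced_def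
proof
  fix w
  let ?m = "\<lambda>e. nat \<bar>int (g e) - int (f e)\<bar>"
  have fin: "finite E"
    using mg by (simp add: multigraph_def)
  have "{x\<in>diff_edges E f g. w \<in> res_ends ends x} = (SIGMA e:{e\<in>E. w \<in> ends e}. {..<?m e})"
    by (auto simp: diff_edges_def res_ends_def)
  then have "(\<Sum>x\<in>{x\<in>diff_edges E f g. w \<in> res_ends ends x}. color_sign (diff_color C f g x)) =
      (\<Sum>e\<in>{e\<in>E. w \<in> ends e}. \<Sum>k<?m e. color_sign (diff_color C f g (e, k)))"
    using fin by (simp add: sum.Sigma)
  also have "\<dots> = (\<Sum>e\<in>{e\<in>E. w \<in> ends e}. real (g e) * color_sign (C e) - real (f e) * color_sign (C e))"
  proof (rule sum.cong[OF refl])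
    fix e
    show "(\<Sum>k<?m e. color_sign (diff_color C f g (e, k))) =
        real (g e) * color_sign (C e) - real (f e) * color_sign (C e)"
    proof (cases "f e < g e")
      case True
      then have "?m e = g e - f e"
        by (simp add: nat_diff_distrib)
      then show ?thesis
        using True by (simp add: diff_color_def of_nat_diff algebra_simps)
    next
      case False
      then have "?m e = f e - g e"
        by (simp add: nat_diff_distrib)
      then show ?thesis
        using False by (simp add: diff_color_def of_nat_diff algebra_simps)
    qed
  qed
  also have "\<dots> = 0"
    using in_alt_cone_nat_signed_sum[OF mg f, of w] in_alt_cone_nat_signed_sum[OF mg g, of w]
    by (simp add: sum_subtractf)
  finally show "(\<Sum>x\<in>{x\<in>diff_edges E f g. w \<in> res_ends ends x}. color_sign (diff_color C f g x)) = 0" .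
qed

lemma diff_CAT_edge:
  assumes "is_CAT (diff_edges E f g) en col vs es" and "k < length es"
  shows "fst (es ! k) \<in> E" and "snd (es ! k) < nat \<bar>int (g (fst (es ! k))) - int (f (fst (es ! k)))\<bar>"
proof -
  have "es ! k \<in> diff_edges E f g"
    using assms nth_mem[OF assms(2)] unfolding is_CAT_def by blast
  then show "fst (es ! k) \<in> E" and "snd (es ! k) < nat \<bar>int (g (fst (es ! k))) - int (f (fst (es ! k)))\<bar>"
    by (cases "es ! k", simp add: diff_edges_def)+
qed

lemma diff_CAT_repeated_edge:
  assumes "is_CAT (diff_edges E f g) en col vs es"
    and "i < k" "k < length es" "fst (es ! i) = fst (es ! k)"
  shows "2 \<le> nat \<bar>int (g (fst (es ! k))) - int (f (fst (es ! k)))\<bar>"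
proof -
  have "es ! i \<noteq> es ! k"
    using assms by (simp add: is_CAT_def nth_eq_iff_index_eq)
  then have "snd (es ! i) \<noteq> snd (es ! k)"
    using assms(4) by (simp add: prod_eq_iff)
  moreover have "i < length es"
    using assms(2,3) by simp
  then have "snd (es ! i) < nat \<bar>int (g (fst (es ! k))) - int (f (fst (es ! k)))\<bar>"
    using diff_CAT_edge(2)[OF assms(1), of i] assms(4) by simp
  moreover have "snd (es ! k) < nat \<bar>int (g (fst (es ! k))) - int (f (fst (es ! k)))\<bar>"
    using diff_CAT_edge(2)[OF assms(1,3)] .
  ultimately show ?thesis
    by linarith
qed

text \<open>Parallel copies have equal colours, so three of them in such a CAT would leave three
  distinct endpoints of one edge.\<close>

lemma diff_CAT_at_most_two_copies:
  assumes mg: "multigraph V E ends"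
    and cat: "is_CAT (diff_edges E f g) (res_ends ends) (diff_color C f g) vs es"
    and exits: "same_color_exits_distinct (diff_color C f g) vs es"
  shows "\<forall>i j k. i < j \<longrightarrow> j < k \<longrightarrow> k < length es \<longrightarrow>
    fst (es ! i) = fst (es ! j) \<longrightarrow> fst (es ! j) \<noteq> fst (es ! k)"
proof (intro allI impI notI)
  fix i j k
  assume ijk: "i < j" "j < k" "k < length es" "fst (es ! i) = fst (es ! j)" "fst (es ! j) = fst (es ! k)"
  have "card (res_ends ends (es ! i)) = 2"
    using mg diff_CAT_edge(1)[OF cat, of i] ijk by (simp add: multigraph_def res_ends_def)
  moreover have "3 \<le> card (res_ends ends (es ! i))"
  proof (rule card_ends_ge_3_if_three_parallel_exits[OF cat exits ijk(1-3)])
    show "finite (res_ends ends (es ! i))"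
      using \<open>card (res_ends ends (es ! i)) = 2\<close> by (intro card_ge_0_finite) simp
  qed (use ijk in \<open>simp_all add: res_ends_def diff_color_def\<close>)
  ultimately show False
    by simp
qed

text \<open>The first copy of e in the CAT becomes e_1 resp. e_3 and the second one e_2 resp. e_4;
  the latter exist in G(f) because then |g e - f e| \<ge> 2 and g is feasible.\<close>

lemma residual_CAT_of_diff_CAT:
  assumes mg: "multigraph V E ends" and g: "feasible E l u g"
    and cat: "is_CAT (diff_edges E f g) (res_ends ends) (diff_color C f g) vs es"
    and exits: "same_color_exits_distinct (diff_color C f g) vs es"
    and e0: "e0 \<in> fst ` set es"
  shows "has_CAT_through (res_edges E l u f) (res_ends ends) (res_color C)
    (e0, if f e0 < g e0 then 1 else 3)"
proof -
  let ?n = "length es"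
  define repeated where "repeated k \<longleftrightarrow> (\<exists>i<k. fst (es ! i) = fst (es ! k))" for k
  define base where "base e = (if f e < g e then 1 else 3 :: nat)" for e
  define \<phi> where "\<phi> k = (fst (es ! k), base (fst (es ! k)) + (if repeated k then 1 else 0))" for k
  have "inj_on \<phi> {..<?n}"
  proof (rule inj_onI)
    fix k1 k2
    assume k: "k1 \<in> {..<?n}" "k2 \<in> {..<?n}" "\<phi> k1 = \<phi> k2"
    then have "(fst (es ! k1), repeated k1) = (fst (es ! k2), repeated k2)"
      by (auto simp: \<phi>_def split: if_splits)
    then show "k1 = k2"
      using inj_onD[OF inj_on_key_repeated[OF diff_CAT_at_most_two_copies[OF mg cat exits]]] k(1,2)
      unfolding repeated_def by blast
  qed
  moreover have "\<phi> k \<in> res_edges E l u f" if k: "k < ?n" for k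
  proof -
    let ?e = "fst (es ! k)"
    have "2 \<le> nat \<bar>int (g ?e) - int (f ?e)\<bar>" if "repeated k"
    proof -
      obtain i where "i < k" "fst (es ! i) = ?e"
        using \<open>repeated k\<close> unfolding repeated_def by blast
      then show ?thesis
        using diff_CAT_repeated_edge[OF cat _ k] by blast
    qed
    moreover have "l ?e \<le> g ?e" "g ?e \<le> u ?e"
      using g diff_CAT_edge(1)[OF cat k] by (auto simp: feasible_def)
    ultimately show ?thesis
      using diff_CAT_edge[OF cat k] by (auto simp: \<phi>_def base_def res_edges_def)
  qed
  moreover have "res_ends ends (\<phi> k) = res_ends ends (es ! k)" for k
    by (simp add: \<phi>_def res_ends_def)
  moreover have "res_color C (\<phi> k) = diff_color C f g (es ! k)" for k
    by (simp add: \<phi>_def base_def res_color_def diff_color_def)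
  ultimately have "is_CAT (res_edges E l u f) (res_ends ends) (res_color C) vs (map \<phi> [0..<?n])"
    by (intro is_CAT_relabel[OF cat]) auto
  moreover obtain p where p: "p < ?n" "fst (es ! p) = e0" "\<forall>i<p. fst (es ! i) \<noteq> e0"
  proof -
    have "\<exists>p. p < ?n \<and> fst (es ! p) = e0"
      using e0 by (metis fst_conv image_iff in_set_conv_nth)
    then obtain p where p: "p < ?n" "fst (es ! p) = e0" "\<forall>i<p. \<not> (i < ?n \<and> fst (es ! i) = e0)"
      unfolding exists_least_iff[of "\<lambda>p. p < ?n \<and> fst (es ! p) = e0"] by blast
    then show thesis
      using that by simp
  qed
  then have "\<phi> p = (e0, if f e0 < g e0 then 1 else 3)"
    by (simp add: \<phi>_def base_def repeated_def)
  ultimately show ?thesis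
    unfolding has_CAT_through_def using p(1) by force
qed

lemma residual_has_CAT_through_first_copy:
  assumes mg: "multigraph V E ends"
    and f: "in_alt_cone_nat V E ends C f" and g: "in_alt_cone_nat V E ends C g"
    and g_feasible: "feasible E l u g" and e: "e \<in> E" "f e \<noteq> g e"
  shows "has_CAT_through (res_edges E l u f) (res_ends ends) (res_color C)
    (e, if f e < g e then 1 else 3)"
proof -
  have "finite E" and two_ends: "\<forall>e\<in>E. card (ends e) = 2"
    using mg by (simp_all add: multigraph_def)
  then have "finite (diff_edges E f g)"
    by (simp add: diff_edges_def)
  moreover have "\<forall>x\<in>diff_edges E f g. card (res_ends ends x) = 2"
    using two_ends by (auto simp: diff_edges_def res_ends_def)
  moreover have "(e, 0) \<in> diff_edges E f g"
    using e by (simp add: diff_edges_def)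
  ultimately have "has_CAT_through (diff_edges E f g) (res_ends ends) (diff_color C f g) (e, 0)"
    using color_balanced_has_CAT_through diff_color_balanced[OF mg f g] by metis
  then obtain vs es where "is_CAT (diff_edges E f g) (res_ends ends) (diff_color C f g) vs es"
    and "(e, 0) \<in> set es"
    unfolding has_CAT_through_def by blast
  from shortest_CAT_same_color_exits_distinct[OF this]
  obtain vs es where cat: "is_CAT (diff_edges E f g) (res_ends ends) (diff_color C f g) vs es"
    and "(e, 0) \<in> set es" and exits: "same_color_exits_distinct (diff_color C f g) vs es"
    by blast
  then have "e \<in> fst ` set es"
    by (metis fst_conv image_eqI)
  then show ?thesis
    by (rule residual_CAT_of_diff_CAT[OF mg g_feasible cat exits])
qed

theorem theorem3p2:
  fixes V :: "'v set" and E :: "'e set" and ends :: "'e \<Rightarrow> 'v set"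
    and C :: "'e \<Rightarrow> color" and l u f :: "'e \<Rightarrow> nat"
  assumes "multigraph V E ends"
    and "\<forall>e\<in>E. l e \<le> u e"
    and "in_alt_cone_nat V E ends C f"
    and "\<not> feasible E l u f"
    and "\<exists>g. in_alt_cone_nat V E ends C g \<and> feasible E l u g"
  shows "\<forall>e\<in>E.
     (f e < l e \<longrightarrow> has_CAT_through (res_edges E l u f) (res_ends ends) (res_color C) (e, 1)) \<and>
     (f e > u e \<longrightarrow> has_CAT_through (res_edges E l u f) (res_ends ends) (res_color C) (e, 3))"
proof (intro ballI conjI impI)
  obtain g where g: "in_alt_cone_nat V E ends C g" "feasible E l u g"
    using assms(5) by blast
  fix e
  assume "e \<in> E"
  then have "l e \<le> g e" "g e \<le> u e"
    using g(2) by (auto simp: feasible_def)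
  note first_copy = residual_has_CAT_through_first_copy[OF assms(1,3) g \<open>e \<in> E\<close>]
  show "has_CAT_through (res_edges E l u f) (res_ends ends) (res_color C) (e, 1)" if "f e < l e"
    using first_copy that \<open>l e \<le> g e\<close> by simp
  show "has_CAT_through (res_edges E l u f) (res_ends ends) (res_color C) (e, 3)" if "f e > u e"
    using first_copy that \<open>g e \<le> u e\<close> by simp
qed

end
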